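(* For every integer $k\ge 3$, there exists a majority neighbor sum distinguishing $4$-edge-coloring $c$ of $K_{2k}$ with the following property: if $v_1,\dots,v_{2k}$ is the ordering of the vertices of $K_{2k}$ with $\sigma_c(v_i)<\sigma_c(v_j)$ for all $i<j$, then $v_k$ is incident to at most $k-2$ edges of color $2$, or $v_{k+1}$ is incident to at most $k-2$ edges of color $3$.
   Context: A $4$-edge-coloring of $G$ is any map $c:E(G)\to\{1,2,3,4\}$ (adjacent edges may share colors). It induces $\sigma_c(v)=\sum_{u\in N(v)}c(vu)$. The coloring is neighbor sum distinguishing if $\sigma_c(u)\ne\sigma_c(v)$ for every edge $uv$ (in a complete graph this means all values $\sigma_c(v)$ are distinct, so the ordering is well defined), and majority if every vertex $v$ is incident to at most $d(v)/2$ edges of each single color. *)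

theory Defs
  imports Main
begin

text \<open>The complete graph K_n has vertex set {..<n} and edge set all doubletons {u,v}, u \<noteq> v.
  An edge coloring is a map from edges (doubleton sets) to colors.\<close>

definition is_4_edge_coloring :: "nat \<Rightarrow> (nat set \<Rightarrow> nat) \<Rightarrow> bool" where
  "is_4_edge_coloring n c \<longleftrightarrow> (\<forall>u<n. \<forall>v<n. u \<noteq> v \<longrightarrow> c {u, v} \<in> {1..4})"

definition sigma :: "nat \<Rightarrow> (nat set \<Rightarrow> nat) \<Rightarrow> nat \<Rightarrow> nat" where
  "sigma n c v = (\<Sum>u\<in>{..<n} - {v}. c {v, u})"

definition deg_col :: "nat \<Rightarrow> (nat set \<Rightarrow> nat) \<Rightarrow> nat \<Rightarrow> nat \<Rightarrow> nat" where
  "deg_col n c v j = card {u \<in> {..<n} - {v}. c {v, u} = j}"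

definition nsd :: "nat \<Rightarrow> (nat set \<Rightarrow> nat) \<Rightarrow> bool" where
  "nsd n c \<longleftrightarrow> (\<forall>u<n. \<forall>v<n. u \<noteq> v \<longrightarrow> sigma n c u \<noteq> sigma n c v)"

text \<open>Majority: each vertex (degree n-1 in K_n) has at most d(v)/2 edges of each color.\<close>
definition majority :: "nat \<Rightarrow> (nat set \<Rightarrow> nat) \<Rightarrow> bool" where
  "majority n c \<longleftrightarrow> (\<forall>v<n. \<forall>j. 2 * deg_col n c v j \<le> n - 1)"

end

theory Submission
  imports Defs
begin

(* Color the edge uv of K_2k by a function f of u + v alone.  Then vertex v sees the colors of
   the window of sums v, ..., v + 2k - 1 with 2v removed, and sigma(v+1) - sigma(v) telescopes to
   f(v + 2k) - f(v) - (f(2v + 2) - f(2v)).  For the color pattern sum_color this difference is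
   positive, so sigma is strictly increasing in the vertex label; hence the sorted order is forced
   to be v_i = i - 1, and v_k = k - 1 sees too few sums of color 2.  The majority condition is a
   count of each color class inside the windows. *)

definition sum_coloring :: "(nat \<Rightarrow> nat) \<Rightarrow> nat set \<Rightarrow> nat" where
  "sum_coloring f e = f (\<Sum>e)"

lemma sum_coloring_doubleton: "u \<noteq> v \<Longrightarrow> sum_coloring f {v, u} = f (v + u)"
  by (simp add: sum_coloring_def)

lemma sigma_sum_coloring: "sigma n (sum_coloring f) v = (\<Sum>u\<in>{..<n} - {v}. f (v + u))"
  unfolding sigma_def by (rule sum.cong) (auto simp: sum_coloring_doubleton)

lemma sigma_sum_coloring_Suc:
  assumes "Suc v < n"
  shows "sigma n (sum_coloring f) (Suc v) + f (2 * v + 2) + f v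
       = sigma n (sum_coloring f) v + f (2 * v) + f (v + n)"
proof -
  have shift: "(\<Sum>u<n. f (Suc v + u)) + f v = (\<Sum>u<n. f (v + u)) + f (v + n)"
    by (induction n) (auto simp: add.commute)
  have "(\<Sum>u<n. f (w + u)) = sigma n (sum_coloring f) w + f (2 * w)" if "w < n" for w
    using that sum.remove[of "{..<n}" w "\<lambda>u. f (w + u)"]
    by (simp add: sigma_sum_coloring mult_2 add.commute)
  from this[of v] this[of "Suc v"] shift assms show ?thesis
    by simp
qed

lemma strict_mono_on_sigma_sum_coloring:
  assumes "\<And>v. Suc v < n \<Longrightarrow> f (2 * v + 2) + f v < f (2 * v) + f (v + n)"
  shows "strict_mono_on {..<n} (sigma n (sum_coloring f))"
proof (rule strict_mono_onI)
  fix v w assume "v \<in> {..<n}" "w \<in> {..<n}" "v < w"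
  have step: "sigma n (sum_coloring f) u < sigma n (sum_coloring f) (Suc u)"
    if "u \<in> {u. Suc u < n}" for u
  proof -
    from that have "Suc u < n" by simp
    from sigma_sum_coloring_Suc[OF this, of f] assms[OF this] show ?thesis
      by linarith
  qed
  have "{v..<w} \<subseteq> {u. Suc u < n}"
    using \<open>w \<in> {..<n}\<close> by auto
  with step \<open>v < w\<close> show "sigma n (sum_coloring f) v < sigma n (sum_coloring f) w"
    by (rule lift_Suc_mono_less_ivl)
qed

lemma deg_col_sum_coloring:
  "deg_col n (sum_coloring f) v j = card {s \<in> {v..<v + n} - {2 * v}. f s = j}"
proof -
  have "deg_col n (sum_coloring f) v j = card {u \<in> {..<n} - {v}. f (v + u) = j}"
    unfolding deg_col_def by (rule arg_cong[where f = card]) (auto simp: sum_coloring_doubleton)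
  also have "\<dots> = card ((+) v ` {u \<in> {..<n} - {v}. f (v + u) = j})"
    by (rule card_image[symmetric]) (simp add: inj_on_def)
  also have "(+) v ` {u \<in> {..<n} - {v}. f (v + u) = j} = {s \<in> {v..<v + n} - {2 * v}. f s = j}"
  proof (intro equalityI subsetI)
    fix s assume "s \<in> (+) v ` {u \<in> {..<n} - {v}. f (v + u) = j}"
    then show "s \<in> {s \<in> {v..<v + n} - {2 * v}. f s = j}"
      by (auto simp: mult_2)
  next
    fix s assume "s \<in> {s \<in> {v..<v + n} - {2 * v}. f s = j}"
    then show "s \<in> (+) v ` {u \<in> {..<n} - {v}. f (v + u) = j}"
      by (auto simp: image_iff intro!: exI[of _ "s - v"])
  qed
  finally show ?thesis .
qed

lemma nsd_if_strict_mono_on_sigma: "strict_mono_on {..<n} (sigma n c) \<Longrightarrow> nsd n c"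
  unfolding nsd_def by (auto dest: strict_mono_on_eqD)

lemma bij_betw_strict_mono_on_eq_pred:
  fixes h :: "nat \<Rightarrow> nat"
  assumes bij: "bij_betw h {1..n} {..<n}" and mono: "strict_mono_on {1..n} h"
    and i: "i \<in> {1..n}"
  shows "h i = i - 1"
proof -
  have inj: "inj_on h {1..n}"
    using bij by (rule bij_betw_imp_inj_on)
  have range: "h j < n" if "j \<in> {1..n}" for j
    using bij that by (auto dest: bij_betw_apply)
  have "h ` {1..i} \<subseteq> {..h i}"
    using i by (auto intro!: strict_mono_on_leD[OF mono])
  then have "card {1..i} \<le> card {..h i}"
    using i by (intro card_inj_on_le[OF inj_on_subset[OF inj]]) auto
  moreover have "h ` {i..n} \<subseteq> {h i..<n}"
    using i by (auto intro!: strict_mono_on_leD[OF mono] range)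
  then have "card {i..n} \<le> card {h i..<n}"
    using i by (intro card_inj_on_le[OF inj_on_subset[OF inj]]) auto
  ultimately show ?thesis
    using i range[OF i] by simp
qed

lemma sorting_order_eq_pred:
  fixes g :: "nat \<Rightarrow> 'a::linorder"
  assumes "strict_mono_on {..<n} g" and "bij_betw ord {1..n} {..<n}"
    and "\<forall>i\<in>{1..n}. \<forall>j\<in>{1..n}. i < j \<longrightarrow> g (ord i) < g (ord j)"
    and "i \<in> {1..n}"
  shows "ord i = i - 1"
proof (rule bij_betw_strict_mono_on_eq_pred)
  have "ord i \<in> {..<n}" if "i \<in> {1..n}" for i
    using assms(2) that by (rule bij_betw_apply)
  then show "strict_mono_on {1..n} ord"
    using assms(3) by (auto intro!: strict_mono_onI simp: strict_mono_on_less[OF assms(1), symmetric])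
qed (use assms in auto)

lemma card_odd_atLeastLessThan: "card {s \<in> {a..<b}. odd s} = b div 2 - a div 2"
proof (induction b)
  case (Suc b)
  show ?case
  proof (cases "a \<le> b \<and> odd b")
    case True
    then have "{s \<in> {a..<Suc b}. odd s} = insert b {s \<in> {a..<b}. odd s}"
      by auto
    moreover have "a div 2 \<le> b div 2"
      using True by (simp add: div_le_mono)
    ultimately show ?thesis
      using Suc True by (simp add: Suc_diff_le)
  next
    case False
    then have "{s \<in> {a..<Suc b}. odd s} = {s \<in> {a..<b}. odd s}"
      by (auto simp: less_Suc_eq)
    moreover have "Suc b div 2 - a div 2 = b div 2 - a div 2"
      using False div_le_mono[of "Suc b" a 2] by (cases "even b") auto
    ultimately show ?thesis
      using Suc by simp
  qed
qed simp

lemma card_even_atLeastLessThan: "card {s \<in> {a..<b}. even s} = (b + 1) div 2 - (a + 1) div 2"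
proof -
  have "card {s \<in> {a..<b}. even s} = card (Suc ` {s \<in> {a..<b}. even s})"
    by (simp add: card_image)
  also have "Suc ` {s \<in> {a..<b}. even s} = {s \<in> {a + 1..<b + 1}. odd s}"
    by (auto simp: image_iff elim!: oddE)
  finally show ?thesis
    using card_odd_atLeastLessThan[of "a + 1" "b + 1"] by simp
qed

lemma div_2_bounds: "2 * (n div 2) \<le> n" "n \<le> 2 * (n div 2) + 1" for n :: nat
  by auto

lemma double_minus_one_div_2: "(2 * k - 1) div 2 = k - 1" for k :: nat
  by presburger

definition sum_color :: "nat \<Rightarrow> nat \<Rightarrow> nat" where
  "sum_color k s =
    (if s < k then 1
     else if s < 2 * k - 1 then (if even s then 2 else 3)
     else if s = 2 * k - 1 then 2
     else if even s then 3 else 4)"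

lemma sum_color_in_range: "sum_color k s \<in> {1..4}"
  by (simp add: sum_color_def)

lemma sum_color_step:
  assumes "3 \<le> k" "Suc v < 2 * k"
  shows "sum_color k (2 * v + 2) + sum_color k v < sum_color k (2 * v) + sum_color k (v + 2 * k)"
  using assms by (auto simp: sum_color_def)

lemma card_sum_color_window_three_le:
  assumes k: "3 \<le> k" and v: "v < 2 * k"
  shows "card {s \<in> {v..<v + 2 * k} - {2 * v}. sum_color k s = 3} \<le> k - 1"
    (is "card ?W \<le> _")
proof (cases "v < k")
  case True
  let ?A = "{s \<in> {k..<2 * k - 1}. odd s}" and ?B = "{s \<in> {2 * k..<v + 2 * k}. even s}"
  have A: "card ?A = k - 1 - k div 2"
    unfolding card_odd_atLeastLessThan double_minus_one_div_2 ..
  have B: "card ?B = (v + 1) div 2"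
    unfolding card_even_atLeastLessThan by simp
  have "card ?W \<le> card (?A \<union> ?B)"
    by (rule card_mono) (auto simp: sum_color_def split: if_splits)
  also have "\<dots> \<le> card ?A + card ?B"
    by (rule card_Un_le)
  also have "\<dots> \<le> k - 1"
    unfolding A B using True k div_le_mono[of "v + 1" k 2] div_2_bounds[of k] by linarith
  finally show ?thesis .
next
  case False
  let ?A = "{s \<in> {v..<2 * k - 1}. odd s}" and ?B = "{s \<in> {2 * k..<2 * v}. even s}"
    and ?C = "{s \<in> {2 * v + 1..<v + 2 * k}. even s}"
  have A: "card ?A = k - 1 - v div 2"
    unfolding card_odd_atLeastLessThan double_minus_one_div_2 ..
  have B: "card ?B = v - k"
    unfolding card_even_atLeastLessThan by simp
  have C: "card ?C = (v + 1) div 2 + k - (v + 1)"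
    unfolding card_even_atLeastLessThan by simp
  have "card ?W \<le> card (?A \<union> ?B \<union> ?C)"
    using False by (intro card_mono) (auto simp: sum_color_def split: if_splits)
  also have "\<dots> \<le> card ?A + card ?B + card ?C"
    using card_Un_le[of ?A ?B] card_Un_le[of "?A \<union> ?B" ?C] by linarith
  also have "\<dots> \<le> k - 1"
    unfolding A B C using False v div_2_bounds[of v] div_2_bounds[of "v + 1"] by linarith
  finally show ?thesis .
qed

lemma card_sum_color_window_le:
  assumes k: "3 \<le> k" and v: "v < 2 * k"
  shows "card {s \<in> {v..<v + 2 * k} - {2 * v}. sum_color k s = j} \<le> k - 1"
    (is "card ?W \<le> _")
proof -
  consider "j = 1" | "j = 2" | "j = 3" | "j = 4" | "j \<notin> {1..4}"
    by fastforce
  then show ?thesis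
  proof cases
    case 1
    then have "card ?W \<le> card {1..<k}"
      by (intro card_mono) (auto simp: sum_color_def split: if_splits)
    then show ?thesis
      by simp
  next
    case 2
    let ?A = "{s \<in> {k..<2 * k - 1}. even s}"
    have A: "card ?A = k - (k + 1) div 2"
      unfolding card_even_atLeastLessThan using k by simp
    have "card ?W \<le> card (insert (2 * k - 1) ?A)"
      using 2 by (intro card_mono) (auto simp: sum_color_def split: if_splits)
    also have "\<dots> \<le> card ?A + 1"
      by (simp add: card_insert_if)
    also have "\<dots> \<le> k - 1"
      unfolding A using k div_2_bounds[of "k + 1"] by linarith
    finally show ?thesis .
  next
    case 3
    with card_sum_color_window_three_le[OF k v] show ?thesis
      by simp
  next
    case 4
    let ?A = "{s \<in> {2 * k..<v + 2 * k}. odd s}"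
    have "card ?W \<le> card ?A"
      using 4 by (intro card_mono) (auto simp: sum_color_def split: if_splits)
    also have "card ?A = v div 2"
      unfolding card_odd_atLeastLessThan by simp
    also have "\<dots> \<le> k - 1"
      using v div_2_bounds[of v] by linarith
    finally show ?thesis .
  next
    case 5
    then have "?W = {}"
      using sum_color_in_range[of k] by auto
    then show ?thesis
      by (metis card.empty le0)
  qed
qed

lemma majority_sum_color:
  assumes "3 \<le> k"
  shows "majority (2 * k) (sum_coloring (sum_color k))"
  unfolding majority_def
proof (intro allI impI)
  fix v j assume "v < 2 * k"
  from card_sum_color_window_le[OF assms this, of j]
  show "2 * deg_col (2 * k) (sum_coloring (sum_color k)) v j \<le> 2 * k - 1"
    unfolding deg_col_sum_coloring by linarith
qed

(* The diagonal 2v = 2k - 2 is an even sum in [k, 2k - 1), so vertex k - 1 loses one sum of color 2. *)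
lemma deg_col_sum_color_middle:
  assumes k: "3 \<le> k"
  shows "deg_col (2 * k) (sum_coloring (sum_color k)) (k - 1) 2 \<le> k - 2"
proof -
  let ?W = "{s \<in> {k - 1..<k - 1 + 2 * k} - {2 * (k - 1)}. sum_color k s = 2}"
    and ?A = "{s \<in> {k..<2 * k - 2}. even s}"
  have A: "card ?A = k - 1 - (k + 1) div 2"
    unfolding card_even_atLeastLessThan using k by simp
  have "card ?W \<le> card (insert (2 * k - 1) ?A)"
    by (intro card_mono) (auto simp: sum_color_def split: if_splits)
  also have "\<dots> \<le> card ?A + 1"
    by (simp add: card_insert_if)
  also have "\<dots> \<le> k - 2"
    unfolding A using k div_2_bounds[of "k + 1"] by linarith
  finally show ?thesis
    unfolding deg_col_sum_coloring .
qed

theorem mainTheorem20: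
  fixes k :: nat
  assumes "k \<ge> 3"
  shows "\<exists>c. is_4_edge_coloring (2*k) c \<and> nsd (2*k) c \<and> majority (2*k) c \<and>
    (\<forall>ord. bij_betw ord {1..2*k} {..<2*k} \<and>
       (\<forall>i\<in>{1..2*k}. \<forall>j\<in>{1..2*k}. i < j \<longrightarrow> sigma (2*k) c (ord i) < sigma (2*k) c (ord j))
     \<longrightarrow> deg_col (2*k) c (ord k) 2 \<le> k - 2 \<or> deg_col (2*k) c (ord (k+1)) 3 \<le> k - 2)"
proof (intro exI[of _ "sum_coloring (sum_color k)"] conjI allI impI disjI1)
  have sorted: "strict_mono_on {..<2 * k} (sigma (2 * k) (sum_coloring (sum_color k)))"
    using sum_color_step[OF assms] by (intro strict_mono_on_sigma_sum_coloring)
  show "is_4_edge_coloring (2 * k) (sum_coloring (sum_color k))"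
    unfolding is_4_edge_coloring_def by (auto simp: sum_coloring_doubleton sum_color_def)
  show "nsd (2 * k) (sum_coloring (sum_color k))"
    using sorted by (rule nsd_if_strict_mono_on_sigma)
  show "majority (2 * k) (sum_coloring (sum_color k))"
    using assms by (rule majority_sum_color)
  fix ord
  assume "bij_betw ord {1..2*k} {..<2*k} \<and> (\<forall>i\<in>{1..2*k}. \<forall>j\<in>{1..2*k}. i < j \<longrightarrow>
    sigma (2*k) (sum_coloring (sum_color k)) (ord i) < sigma (2*k) (sum_coloring (sum_color k)) (ord j))"
  with sorted assms have "ord k = k - 1"
    by (intro sorting_order_eq_pred[of "2 * k"]) auto
  with deg_col_sum_color_middle[OF assms]
  show "deg_col (2 * k) (sum_coloring (sum_color k)) (ord k) 2 \<le> k - 2"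
    by simp
qed

end
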